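(* Let $G$ be a graph on vertex set $\{1,\dots,N\}$ with independence number $\alpha(G)$; let $G_x$ be the set of neighbours of $x$ and $N_x=|G_x|$. In the equality problem defined by $G$, Alice receives $x$ and Bob receives $y$, with the promise that $x=y$ or $x\in G_y$; Bob outputs $z\in\{1,2\}$, and the success metric is $$\mathcal{S}(G)=\frac{1}{\sum_x N_x+N}\sum_{y=1}^N\Big(p(1|x=y,y)+\sum_{x\in G_y}p(2|x,y)\Big).$$ For a classical protocol with encoding $p_e(m|x)$ (messages $m$ from a finite set of arbitrary size) and decoding $p_d(z|y,m)$, so that $p(z|x,y)=\sum_m p_e(m|x)p_d(z|y,m)$, let $\mathcal{S}_C(G)$ be its success metric and $\mathcal{D}_C=\frac1N\sum_m\max_x p_e(m|x)$ its distinguishability. Then every classical protocol satisfies $$\frac{1}{N\alpha(G)}\Big(\big(\textstyle\sum_x N_x+N\big)\big(\mathcal{S}_C(G)-1\big)+N\Big)\le \mathcal{D}_C.$$ *)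

theory Defs
  imports Complex_Main
begin

definition is_graph :: "nat \<Rightarrow> (nat \<Rightarrow> nat \<Rightarrow> bool) \<Rightarrow> bool" where
  "is_graph N E \<longleftrightarrow> (\<forall>x\<in>{1..N}. \<forall>y\<in>{1..N}. E x y \<longleftrightarrow> E y x) \<and> (\<forall>x\<in>{1..N}. \<not> E x x)"

definition nbhd :: "nat \<Rightarrow> (nat \<Rightarrow> nat \<Rightarrow> bool) \<Rightarrow> nat \<Rightarrow> nat set" where
  "nbhd N E x = {y \<in> {1..N}. E x y}"

definition independent_set :: "nat \<Rightarrow> (nat \<Rightarrow> nat \<Rightarrow> bool) \<Rightarrow> nat set \<Rightarrow> bool" where
  "independent_set N E S \<longleftrightarrow> S \<subseteq> {1..N} \<and> (\<forall>x\<in>S. \<forall>y\<in>S. \<not> E x y)"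

definition independence_number :: "nat \<Rightarrow> (nat \<Rightarrow> nat \<Rightarrow> bool) \<Rightarrow> nat" where
  "independence_number N E = Max {card S | S. independent_set N E S}"

(* classical protocol: encoding pe x m = p_e(m|x) over finite message set M,
   decoding pd y m z = p_d(z|y,m), z \<in> {1,2} *)
definition classical_protocol ::
  "nat \<Rightarrow> 'm set \<Rightarrow> (nat \<Rightarrow> 'm \<Rightarrow> real) \<Rightarrow> (nat \<Rightarrow> 'm \<Rightarrow> nat \<Rightarrow> real) \<Rightarrow> bool" where
  "classical_protocol N M pe pd \<longleftrightarrow> finite M \<and>
     (\<forall>x\<in>{1..N}. (\<forall>m\<in>M. pe x m \<ge> 0) \<and> (\<Sum>m\<in>M. pe x m) = 1) \<and>
     (\<forall>y\<in>{1..N}. \<forall>m\<in>M. pd y m 1 \<ge> 0 \<and> pd y m 2 \<ge> 0 \<and> pd y m 1 + pd y m 2 = 1)"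

definition cprob :: "'m set \<Rightarrow> (nat \<Rightarrow> 'm \<Rightarrow> real) \<Rightarrow> (nat \<Rightarrow> 'm \<Rightarrow> nat \<Rightarrow> real) \<Rightarrow> nat \<Rightarrow> nat \<Rightarrow> nat \<Rightarrow> real" where
  "cprob M pe pd z x y = (\<Sum>m\<in>M. pe x m * pd y m z)"

definition success :: "nat \<Rightarrow> (nat \<Rightarrow> nat \<Rightarrow> bool) \<Rightarrow> 'm set \<Rightarrow> (nat \<Rightarrow> 'm \<Rightarrow> real) \<Rightarrow> (nat \<Rightarrow> 'm \<Rightarrow> nat \<Rightarrow> real) \<Rightarrow> real" where
  "success N E M pe pd =
     (1 / (real (\<Sum>x\<in>{1..N}. card (nbhd N E x)) + real N)) *
     (\<Sum>y\<in>{1..N}. cprob M pe pd 1 y y + (\<Sum>x\<in>nbhd N E y. cprob M pe pd 2 x y))"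

definition distinguishability :: "nat \<Rightarrow> 'm set \<Rightarrow> (nat \<Rightarrow> 'm \<Rightarrow> real) \<Rightarrow> real" where
  "distinguishability N M pe = (1 / real N) * (\<Sum>m\<in>M. Max ((\<lambda>x. pe x m) ` {1..N}))"

end

theory Submission
  imports Defs
begin

(* Since p(2|x,y) = 1 - p(1|x,y), the rescaled success (\<Sum>x N_x + N)(S_C - 1) + N equals
   \<Sum>_m \<Sum>_y p_d(1|y,m) (p_e(m|y) - \<Sum>_{x \<in> G_y} p_e(m|x)).
   Fix a message m. A vertex y contributes positively only if its weight p_e(m|y) exceeds the
   total weight of its neighbours; two adjacent vertices cannot both do so, so the contributing
   vertices form an independent set and the inner sum is at most \<alpha>(G) max_x p_e(m|x).
   Summing over m gives N \<alpha>(G) D_C. *)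

lemma card_le_independence_number:
  assumes "independent_set N E S"
  shows "card S \<le> independence_number N E"
proof -
  have "{card S | S. independent_set N E S} \<subseteq> card ` Pow {1..N}"
    by (auto simp: independent_set_def)
  then have "finite {card S | S. independent_set N E S}"
    by (rule finite_subset) simp
  then show ?thesis
    unfolding independence_number_def using assms by (intro Max_ge) blast+
qed

lemma independence_number_ge_1:
  assumes "is_graph N E" and "N \<ge> 1"
  shows "independence_number N E \<ge> 1"
proof -
  have "independent_set N E {1}"
    using assms by (auto simp: independent_set_def is_graph_def)
  then show ?thesis
    using card_le_independence_number by fastforce
qed

lemma nbhd_subset: "nbhd N E y \<subseteq> {1..N}"
  by (auto simp: nbhd_def)

lemma independent_set_dominant_vertices:
  fixes q :: "nat \<Rightarrow> 'a::linordered_idom"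
  assumes "is_graph N E" and q_nonneg: "\<And>x. x \<in> {1..N} \<Longrightarrow> 0 \<le> q x"
  shows "independent_set N E {y \<in> {1..N}. (\<Sum>x\<in>nbhd N E y. q x) < q y}"
proof -
  have weight_le: "q y \<le> (\<Sum>x\<in>nbhd N E x. q x)" if "E x y" "y \<in> {1..N}" for x y
  proof (rule member_le_sum)
    show "finite (nbhd N E x)"
      using nbhd_subset by (rule finite_subset) simp
  qed (use that nbhd_subset q_nonneg in \<open>auto simp: nbhd_def\<close>)
  show ?thesis
  proof (unfold independent_set_def, intro conjI ballI notI)
    fix x y
    assume "x \<in> {y \<in> {1..N}. (\<Sum>x\<in>nbhd N E y. q x) < q y}"
      and "y \<in> {y \<in> {1..N}. (\<Sum>x\<in>nbhd N E y. q x) < q y}" and "E x y"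
    moreover from this have "E y x"
      using \<open>is_graph N E\<close> by (auto simp: is_graph_def)
    ultimately have "q y < q x" and "q x < q y"
      using weight_le[of x y] weight_le[of y x] by auto
    then show False by simp
  qed auto
qed

lemma sum_mult_unit_interval_le_sum_positive:
  fixes d f :: "'a \<Rightarrow> 'b::linordered_idom"
  assumes "finite A" and "\<And>y. y \<in> A \<Longrightarrow> 0 \<le> d y \<and> d y \<le> 1"
  shows "(\<Sum>y\<in>A. d y * f y) \<le> (\<Sum>y\<in>{y\<in>A. 0 < f y}. f y)"
proof -
  have "(\<Sum>y\<in>A. d y * f y) \<le> (\<Sum>y\<in>A. if 0 < f y then f y else 0)"
  proof (intro sum_mono)
    fix y assume "y \<in> A"
    with assms(2) show "d y * f y \<le> (if 0 < f y then f y else 0)"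
      by (auto simp: mult_left_le_one_le mult_nonneg_nonpos)
  qed
  also have "\<dots> = (\<Sum>y\<in>{y\<in>A. 0 < f y}. f y)"
    using \<open>finite A\<close> by (simp add: sum.inter_filter)
  finally show ?thesis .
qed

lemma sum_weighted_excess_le:
  fixes q d :: "nat \<Rightarrow> real"
  assumes "is_graph N E" and "N \<ge> 1"
    and q_nonneg: "\<And>x. x \<in> {1..N} \<Longrightarrow> 0 \<le> q x"
    and d_unit: "\<And>y. y \<in> {1..N} \<Longrightarrow> 0 \<le> d y \<and> d y \<le> 1"
  shows "(\<Sum>y\<in>{1..N}. d y * (q y - (\<Sum>x\<in>nbhd N E y. q x)))
         \<le> real (independence_number N E) * Max (q ` {1..N})"
proof -
  define S where "S = {y \<in> {1..N}. (\<Sum>x\<in>nbhd N E y. q x) < q y}"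
  have "0 \<le> q 1" and "q 1 \<le> Max (q ` {1..N})"
    using \<open>N \<ge> 1\<close> q_nonneg by auto
  then have Max_nonneg: "0 \<le> Max (q ` {1..N})" by linarith
  have "(\<Sum>y\<in>{1..N}. d y * (q y - (\<Sum>x\<in>nbhd N E y. q x)))
        \<le> (\<Sum>y\<in>{y\<in>{1..N}. 0 < q y - (\<Sum>x\<in>nbhd N E y. q x)}. q y - (\<Sum>x\<in>nbhd N E y. q x))"
    by (rule sum_mult_unit_interval_le_sum_positive) (simp_all add: d_unit)
  also have "\<dots> = (\<Sum>y\<in>S. q y - (\<Sum>x\<in>nbhd N E y. q x))"
    by (rule sum.cong) (auto simp: S_def)
  also have "\<dots> \<le> (\<Sum>y\<in>S. Max (q ` {1..N}))"
  proof (intro sum_mono)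
    fix y assume "y \<in> S"
    have "0 \<le> (\<Sum>x\<in>nbhd N E y. q x)"
      using nbhd_subset q_nonneg by (blast intro: sum_nonneg)
    moreover have "q y \<le> Max (q ` {1..N})"
      using \<open>y \<in> S\<close> by (auto simp: S_def)
    ultimately show "q y - (\<Sum>x\<in>nbhd N E y. q x) \<le> Max (q ` {1..N})" by linarith
  qed
  also have "\<dots> = real (card S) * Max (q ` {1..N})" by simp
  also have "\<dots> \<le> real (independence_number N E) * Max (q ` {1..N})"
    using card_le_independence_number[OF independent_set_dominant_vertices[OF assms(1) q_nonneg]]
      Max_nonneg
    by (intro mult_right_mono) (auto simp: S_def)
  finally show ?thesis .
qed

lemma cprob_2_eq_one_minus_cprob_1:
  assumes "classical_protocol N M pe pd" and "x \<in> {1..N}" and "y \<in> {1..N}"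
  shows "cprob M pe pd 2 x y = 1 - cprob M pe pd 1 x y"
proof -
  have "cprob M pe pd 2 x y = (\<Sum>m\<in>M. pe x m - pe x m * pd y m 1)"
    unfolding cprob_def
  proof (intro sum.cong refl)
    fix m assume "m \<in> M"
    with assms have "pd y m 1 + pd y m 2 = 1"
      unfolding classical_protocol_def by auto
    then have "pd y m 2 = 1 - pd y m 1" by simp
    then show "pe x m * pd y m 2 = pe x m - pe x m * pd y m 1"
      by (simp add: right_diff_distrib)
  qed
  also have "\<dots> = 1 - cprob M pe pd 1 x y"
    using assms by (simp add: cprob_def classical_protocol_def sum_subtractf)
  finally show ?thesis .
qed

lemma cprob_1_excess_eq:
  "cprob M pe pd 1 y y - (\<Sum>x\<in>A. cprob M pe pd 1 x y)
   = (\<Sum>m\<in>M. pd y m 1 * (pe y m - (\<Sum>x\<in>A. pe x m)))"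
  unfolding cprob_def
  by (subst sum.swap)
    (simp add: sum_subtractf sum_distrib_left sum_distrib_right right_diff_distrib mult.commute)

lemma success_gap_eq:
  assumes "classical_protocol N M pe pd"
  shows "(real (\<Sum>x\<in>{1..N}. card (nbhd N E x)) + real N) * (success N E M pe pd - 1) + real N
         = (\<Sum>m\<in>M. \<Sum>y\<in>{1..N}. pd y m 1 * (pe y m - (\<Sum>x\<in>nbhd N E y. pe x m)))"
proof -
  define T where "T = real (\<Sum>x\<in>{1..N}. card (nbhd N E x)) + real N"
  let ?c1 = "cprob M pe pd 1"
  have "T * success N E M pe pd
        = (\<Sum>y\<in>{1..N}. ?c1 y y + (\<Sum>x\<in>nbhd N E y. cprob M pe pd 2 x y))"
  proof (cases "N = 0")
    case False
    then have "0 < T"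
      unfolding T_def by (intro add_nonneg_pos) (simp_all add: sum_nonneg)
    then show ?thesis
      unfolding success_def T_def [symmetric] by simp
  qed (simp add: success_def)
  also have "\<dots> = (\<Sum>y\<in>{1..N}. real (card (nbhd N E y))
                    + (?c1 y y - (\<Sum>x\<in>nbhd N E y. ?c1 x y)))"
  proof (intro sum.cong refl)
    fix y assume "y \<in> {1..N}"
    then have "(\<Sum>x\<in>nbhd N E y. cprob M pe pd 2 x y) = (\<Sum>x\<in>nbhd N E y. 1 - ?c1 x y)"
      using nbhd_subset cprob_2_eq_one_minus_cprob_1[OF assms] by (blast intro: sum.cong)
    then show "?c1 y y + (\<Sum>x\<in>nbhd N E y. cprob M pe pd 2 x y)
               = real (card (nbhd N E y)) + (?c1 y y - (\<Sum>x\<in>nbhd N E y. ?c1 x y))"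
      by (simp add: sum_subtractf)
  qed
  also have "\<dots> = T - real N + (\<Sum>y\<in>{1..N}. ?c1 y y - (\<Sum>x\<in>nbhd N E y. ?c1 x y))"
    by (simp add: T_def sum.distrib)
  finally have "T * (success N E M pe pd - 1) + real N
                = (\<Sum>y\<in>{1..N}. ?c1 y y - (\<Sum>x\<in>nbhd N E y. ?c1 x y))"
    by (simp add: algebra_simps)
  also have "\<dots> = (\<Sum>m\<in>M. \<Sum>y\<in>{1..N}. pd y m 1 * (pe y m - (\<Sum>x\<in>nbhd N E y. pe x m)))"
    unfolding cprob_1_excess_eq by (rule sum.swap)
  finally show ?thesis unfolding T_def .
qed

lemma classical_protocol_decoding_unit:
  assumes "classical_protocol N M pe pd" and "y \<in> {1..N}" and "m \<in> M"
  shows "0 \<le> pd y m 1 \<and> pd y m 1 \<le> 1"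
proof -
  have "0 \<le> pd y m 1" "0 \<le> pd y m 2" "pd y m 1 + pd y m 2 = 1"
    using assms unfolding classical_protocol_def by auto
  then show ?thesis by linarith
qed

lemma success_gap_le:
  assumes "is_graph N E" and "classical_protocol N M pe pd" and "N \<ge> 1"
  shows "(real (\<Sum>x\<in>{1..N}. card (nbhd N E x)) + real N) * (success N E M pe pd - 1) + real N
         \<le> distinguishability N M pe * (real N * real (independence_number N E))"
proof -
  let ?\<alpha> = "real (independence_number N E)"
  have "(real (\<Sum>x\<in>{1..N}. card (nbhd N E x)) + real N) * (success N E M pe pd - 1) + real N
        = (\<Sum>m\<in>M. \<Sum>y\<in>{1..N}. pd y m 1 * (pe y m - (\<Sum>x\<in>nbhd N E y. pe x m)))"
    using assms(2) by (rule success_gap_eq)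
  also have "\<dots> \<le> (\<Sum>m\<in>M. ?\<alpha> * Max ((\<lambda>x. pe x m) ` {1..N}))"
    using assms classical_protocol_decoding_unit[OF assms(2)]
    by (intro sum_mono sum_weighted_excess_le) (auto simp: classical_protocol_def)
  also have "\<dots> = ?\<alpha> * (\<Sum>m\<in>M. Max ((\<lambda>x. pe x m) ` {1..N}))"
    by (rule sum_distrib_left [symmetric])
  also have "\<dots> = distinguishability N M pe * (real N * ?\<alpha>)"
    using \<open>N \<ge> 1\<close> by (simp add: distinguishability_def)
  finally show ?thesis .
qed

theorem theorem3:
  fixes N :: nat and E :: "nat \<Rightarrow> nat \<Rightarrow> bool"
    and M :: "'m set" and pe :: "nat \<Rightarrow> 'm \<Rightarrow> real" and pd :: "nat \<Rightarrow> 'm \<Rightarrow> nat \<Rightarrow> real"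
  assumes "is_graph N E"
    and "classical_protocol N M pe pd"
  shows "(1 / (real N * real (independence_number N E))) *
           ((real (\<Sum>x\<in>{1..N}. card (nbhd N E x)) + real N) * (success N E M pe pd - 1) + real N)
         \<le> distinguishability N M pe"
proof (cases "N = 0")
  case True
  then show ?thesis by (simp add: distinguishability_def)
next
  case False
  then have "N \<ge> 1" by simp
  then have "0 < real N * real (independence_number N E)"
    using independence_number_ge_1[OF assms(1)] by simp
  with success_gap_le[OF assms \<open>N \<ge> 1\<close>] show ?thesis
    by (simp only: times_divide_eq_left mult_1_left pos_divide_le_eq)
qed

end
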